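(* Let $\mathcal{X}=\{1,\dots,n\}$ with $n\ge 2$, let $\pi$ be a strictly positive probability distribution on $\mathcal{X}$, let $P$ be a $\pi$-reversible transition matrix, and fix $\alpha\in(0,1)$. With $g$ and $A_\alpha(S)$ as defined below, and identifying a singleton $\{x\}$ with $x$, $$\operatorname*{argmin}_{S\neq\mathcal{X},\,|S|=1}\|A_\alpha(S)-\Pi\|_{F,\pi}^2=\operatorname*{argmax}_{S\neq\mathcal{X},\,|S|=1}g(S)=\operatorname*{argmax}_{x\in\mathcal{X}}\frac{1-P(x,x)}{1-\pi(x)}.$$
   Context: $S'=\mathcal{X}\setminus S$; $g(S)=\frac{1}{\pi(S)\pi(S')}\sum_{x\in S,\,y\in S'}\pi(x)P(x,y)$. $\pi$-reversible means $\pi(x)P(x,y)=\pi(y)P(y,x)$. For $S\neq\emptyset,\mathcal{X}$, $A_\alpha(S)=\alpha P+(1-\alpha)G_S$ where $G_S(x,y)=\pi(y)/\pi(\mathcal{O}(x))$ if $y\in\mathcal{O}(x)$ and $0$ otherwise, $\mathcal{O}(x)\in\{S,S'\}$ the block containing $x$. $\Pi$ is the matrix with every row equal to $\pi$; $\|M\|_{F,\pi}^2=\operatorname{Tr}(M^*M)$ with $M^*(x,y)=\pi(y)M(y,x)/\pi(x)$. *)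

theory Defs
  imports Main "HOL-Analysis.Analysis"
begin

text \<open>Matrices on a finite state space X are functions nat => nat => real;
  only their values on X x X matter.\<close>

definition prob_dist :: "nat set \<Rightarrow> (nat \<Rightarrow> real) \<Rightarrow> bool" where
  "prob_dist X \<mu> \<longleftrightarrow> (\<forall>x\<in>X. \<mu> x > 0) \<and> sum \<mu> X = 1"

definition transition_matrix :: "nat set \<Rightarrow> (nat \<Rightarrow> nat \<Rightarrow> real) \<Rightarrow> bool" where
  "transition_matrix X P \<longleftrightarrow> (\<forall>x\<in>X. \<forall>y\<in>X. P x y \<ge> 0) \<and> (\<forall>x\<in>X. (\<Sum>y\<in>X. P x y) = 1)"

definition reversible :: "nat set \<Rightarrow> (nat \<Rightarrow> real) \<Rightarrow> (nat \<Rightarrow> nat \<Rightarrow> real) \<Rightarrow> bool" where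
  "reversible X \<mu> P \<longleftrightarrow> (\<forall>x\<in>X. \<forall>y\<in>X. \<mu> x * P x y = \<mu> y * P y x)"

definition cond_g :: "nat set \<Rightarrow> (nat \<Rightarrow> real) \<Rightarrow> (nat \<Rightarrow> nat \<Rightarrow> real) \<Rightarrow> nat set \<Rightarrow> real" where
  "cond_g X \<mu> P S = 1 / (sum \<mu> S * sum \<mu> (X - S)) * (\<Sum>x\<in>S. \<Sum>y\<in>X - S. \<mu> x * P x y)"

definition block_of :: "nat set \<Rightarrow> nat set \<Rightarrow> nat \<Rightarrow> nat set" where
  "block_of X S x = (if x \<in> S then S else X - S)"

definition G_mat :: "nat set \<Rightarrow> (nat \<Rightarrow> real) \<Rightarrow> nat set \<Rightarrow> nat \<Rightarrow> nat \<Rightarrow> real" where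
  "G_mat X \<mu> S x y = (if y \<in> block_of X S x then \<mu> y / sum \<mu> (block_of X S x) else 0)"

definition A_mat :: "nat set \<Rightarrow> (nat \<Rightarrow> real) \<Rightarrow> (nat \<Rightarrow> nat \<Rightarrow> real) \<Rightarrow> real \<Rightarrow> nat set \<Rightarrow> nat \<Rightarrow> nat \<Rightarrow> real" where
  "A_mat X \<mu> P \<alpha> S x y = \<alpha> * P x y + (1 - \<alpha>) * G_mat X \<mu> S x y"

definition Pi_mat :: "(nat \<Rightarrow> real) \<Rightarrow> nat \<Rightarrow> nat \<Rightarrow> real" where
  "Pi_mat \<mu> x y = \<mu> y"

definition adj_pi :: "(nat \<Rightarrow> real) \<Rightarrow> (nat \<Rightarrow> nat \<Rightarrow> real) \<Rightarrow> nat \<Rightarrow> nat \<Rightarrow> real" where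
  "adj_pi \<mu> M x y = \<mu> y * M y x / \<mu> x"

definition mat_mult :: "nat set \<Rightarrow> (nat \<Rightarrow> nat \<Rightarrow> real) \<Rightarrow> (nat \<Rightarrow> nat \<Rightarrow> real) \<Rightarrow> nat \<Rightarrow> nat \<Rightarrow> real" where
  "mat_mult X M N x y = (\<Sum>z\<in>X. M x z * N z y)"

definition mat_trace :: "nat set \<Rightarrow> (nat \<Rightarrow> nat \<Rightarrow> real) \<Rightarrow> real" where
  "mat_trace X M = (\<Sum>x\<in>X. M x x)"

definition frob_sq :: "nat set \<Rightarrow> (nat \<Rightarrow> real) \<Rightarrow> (nat \<Rightarrow> nat \<Rightarrow> real) \<Rightarrow> real" where
  "frob_sq X \<mu> M = mat_trace X (mat_mult X (adj_pi \<mu> M) M)"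

definition argmin_on :: "('a \<Rightarrow> real) \<Rightarrow> 'a set \<Rightarrow> 'a set" where
  "argmin_on f A = {a\<in>A. \<forall>b\<in>A. f a \<le> f b}"

definition argmax_on :: "('a \<Rightarrow> real) \<Rightarrow> 'a set \<Rightarrow> 'a set" where
  "argmax_on f A = {a\<in>A. \<forall>b\<in>A. f b \<le> f a}"

end

theory Submission
  imports Defs
begin

text \<open>Write \<open>\<langle>M, N\<rangle> = Tr(M\<^sup>* N)\<close> for the \<open>\<pi>\<close>-weighted Frobenius inner product. For a
  row-stochastic \<open>M\<close> one has \<open>\<parallel>M - \<Pi>\<parallel>\<^sup>2 = \<langle>M, M\<rangle> - 1\<close>, and \<open>A\<^sub>\<alpha>(S)\<close> is row-stochastic.
  Expanding bilinearly, \<open>\<langle>G\<^sub>S, G\<^sub>S\<rangle> = 2\<close> and, by reversibility (the \<open>\<pi>\<close>-flow from \<open>S\<close> to \<open>S'\<close>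
  equals the flow back), \<open>\<langle>P, G\<^sub>S\<rangle> = 2 - g(S)\<close>. Hence \<open>\<parallel>A\<^sub>\<alpha>(S) - \<Pi>\<parallel>\<^sup>2\<close> is a constant minus
  \<open>2\<alpha>(1 - \<alpha>) g(S)\<close>, so it is minimised exactly where \<open>g\<close> is maximised, and on singletons
  \<open>g({x}) = (1 - P(x,x)) / (1 - \<pi>(x))\<close>.\<close>

definition frob_inner :: "nat set \<Rightarrow> (nat \<Rightarrow> real) \<Rightarrow> (nat \<Rightarrow> nat \<Rightarrow> real) \<Rightarrow> (nat \<Rightarrow> nat \<Rightarrow> real) \<Rightarrow> real" where
  "frob_inner X \<mu> M N = (\<Sum>z\<in>X. \<Sum>x\<in>X. \<mu> z * M z x * N z x / \<mu> x)"

lemma frob_sq_eq_frob_inner: "frob_sq X \<mu> M = frob_inner X \<mu> M M"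
  unfolding frob_sq_def frob_inner_def mat_trace_def mat_mult_def adj_pi_def
  by (subst sum.swap) (simp add: mult.assoc mult.left_commute)

lemma frob_inner_linear_combination:
  "frob_inner X \<mu> (\<lambda>x y. a * M x y + b * N x y) (\<lambda>x y. a * M x y + b * N x y)
     = a\<^sup>2 * frob_inner X \<mu> M M + 2 * a * b * frob_inner X \<mu> M N + b\<^sup>2 * frob_inner X \<mu> N N"
  unfolding frob_inner_def
  by (simp add: sum.distrib sum_distrib_left algebra_simps power2_eq_square add_divide_distrib)

lemma argmin_on_decreasing_affine:
  assumes "k > 0" and "\<And>a. a \<in> A \<Longrightarrow> f a = c - k * g a"
  shows "argmin_on f A = argmax_on g A"
  using assms by (auto simp: argmin_on_def argmax_on_def)

lemma argmax_on_image: "argmax_on g (h ` A) = h ` argmax_on (g \<circ> h) A"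
  by (auto simp: argmax_on_def)

lemma argmax_on_cong: "(\<And>a. a \<in> A \<Longrightarrow> f a = g a) \<Longrightarrow> argmax_on f A = argmax_on g A"
  by (auto simp: argmax_on_def)

lemma proper_card_1_subsets:
  assumes "card X \<ge> 2"
  shows "{S. S \<subseteq> X \<and> S \<noteq> X \<and> card S = 1} = (\<lambda>x. {x}) ` X"
  using assms by (auto simp: card_1_singleton_iff)

lemma transition_matrix_flow_within:
  assumes "transition_matrix X P" and "finite X" and "A \<subseteq> X"
  shows "(\<Sum>z\<in>A. \<Sum>x\<in>A. \<mu> z * P z x) = sum \<mu> A - (\<Sum>z\<in>A. \<Sum>x\<in>X - A. \<mu> z * P z x)"
proof -
  have "(\<Sum>x\<in>A. \<mu> z * P z x) = \<mu> z - (\<Sum>x\<in>X - A. \<mu> z * P z x)" if "z \<in> A" for z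
  proof -
    have "(\<Sum>x\<in>X. P z x) = 1" using assms(1,3) that by (auto simp: transition_matrix_def)
    then have "\<mu> z = (\<Sum>x\<in>X. \<mu> z * P z x)" by (simp add: sum_distrib_left[symmetric])
    also have "\<dots> = (\<Sum>x\<in>A. \<mu> z * P z x) + (\<Sum>x\<in>X - A. \<mu> z * P z x)"
      using sum.subset_diff[OF assms(3,2)] by (simp add: add.commute)
    finally show ?thesis by simp
  qed
  then show ?thesis by (simp add: sum_subtractf)
qed

lemma reversible_flow_swap:
  assumes "reversible X \<mu> P" and "A \<subseteq> X" and "B \<subseteq> X"
  shows "(\<Sum>z\<in>A. \<Sum>x\<in>B. \<mu> z * P z x) = (\<Sum>z\<in>B. \<Sum>x\<in>A. \<mu> z * P z x)"
proof -
  have "(\<Sum>z\<in>A. \<Sum>x\<in>B. \<mu> z * P z x) = (\<Sum>z\<in>A. \<Sum>x\<in>B. \<mu> x * P x z)"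
    using assms by (auto simp: reversible_def intro!: sum.cong)
  then show ?thesis by (simp add: sum.swap[of _ A])
qed

locale finite_prob_dist =
  fixes X :: "nat set" and \<mu> :: "nat \<Rightarrow> real"
  assumes finite: "finite X" and prob_dist: "prob_dist X \<mu>"
begin

lemma pos: "x \<in> X \<Longrightarrow> \<mu> x > 0"
  using prob_dist by (simp add: prob_dist_def)

lemma sum_eq_1: "sum \<mu> X = 1"
  using prob_dist by (simp add: prob_dist_def)

lemma frob_sq_minus_Pi:
  assumes "\<forall>z\<in>X. (\<Sum>x\<in>X. M z x) = 1"
  shows "frob_sq X \<mu> (\<lambda>x y. M x y - Pi_mat \<mu> x y) = frob_inner X \<mu> M M - 1"
proof -
  have row: "(\<Sum>x\<in>X. \<mu> z * (M z x - \<mu> x) * (M z x - \<mu> x) / \<mu> x)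
      = (\<Sum>x\<in>X. \<mu> z * M z x * M z x / \<mu> x) - \<mu> z" if "z \<in> X" for z
  proof -
    have "(\<Sum>x\<in>X. \<mu> z * (M z x - \<mu> x) * (M z x - \<mu> x) / \<mu> x)
        = (\<Sum>x\<in>X. \<mu> z * M z x * M z x / \<mu> x - 2 * \<mu> z * M z x + \<mu> z * \<mu> x)"
      by (intro sum.cong refl) (simp add: pos[THEN less_imp_neq, symmetric] field_simps)
    also have "\<dots> = (\<Sum>x\<in>X. \<mu> z * M z x * M z x / \<mu> x) - 2 * \<mu> z * (\<Sum>x\<in>X. M z x) + \<mu> z * sum \<mu> X"
      by (simp add: sum.distrib sum_subtractf sum_distrib_left)
    finally show ?thesis using assms that by (simp add: sum_eq_1)
  qed
  show ?thesis
    by (simp add: frob_sq_eq_frob_inner frob_inner_def Pi_mat_def row sum_subtractf sum_eq_1)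
qed

lemma cond_g_singleton:
  assumes "transition_matrix X P" and "s \<in> X"
  shows "cond_g X \<mu> P {s} = (1 - P s s) / (1 - \<mu> s)"
proof -
  have "sum \<mu> (X - {s}) = 1 - \<mu> s" and "(\<Sum>y\<in>X - {s}. P s y) = 1 - P s s"
    using assms finite sum_eq_1 by (simp_all add: transition_matrix_def sum_diff1)
  then show ?thesis
    using pos[OF assms(2)] by (simp add: cond_g_def sum_distrib_left[symmetric])
qed

end

locale bipartition = finite_prob_dist +
  fixes S :: "nat set"
  assumes subset: "S \<subseteq> X" and nonempty: "S \<noteq> {}" and proper: "S \<noteq> X"
begin

lemma block_of_subset: "block_of X S z \<subseteq> X"
  using subset by (auto simp: block_of_def)

lemma sum_S_pos: "sum \<mu> S > 0"
  using nonempty subset finite pos by (intro sum_pos) (auto intro: finite_subset)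

lemma sum_complement_pos: "sum \<mu> (X - S) > 0"
  using proper subset finite pos by (intro sum_pos) auto

lemma sum_block_of_pos: "sum \<mu> (block_of X S z) > 0"
  by (simp add: block_of_def sum_S_pos sum_complement_pos)

lemma sum_over_blocks:
  "(\<Sum>z\<in>X. f z (block_of X S z)) = (\<Sum>z\<in>S. f z S) + (\<Sum>z\<in>X - S. f z (X - S))"
proof -
  have "(\<Sum>z\<in>X. f z (block_of X S z))
      = (\<Sum>z\<in>S. f z (block_of X S z)) + (\<Sum>z\<in>X - S. f z (block_of X S z))"
    using sum.subset_diff[OF subset finite] by (simp add: add.commute)
  then show ?thesis by (simp add: block_of_def)
qed

lemma sum_restrict_block_of:
  "(\<Sum>x\<in>X. if x \<in> block_of X S z then f x else 0) = (\<Sum>x\<in>block_of X S z. f x)"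
  by (simp add: sum.inter_restrict[OF finite, symmetric] Int_absorb1 block_of_subset)

lemma G_mat_row_sum: "(\<Sum>x\<in>X. G_mat X \<mu> S z x) = 1"
  using sum_block_of_pos[of z]
  by (simp add: G_mat_def sum_restrict_block_of sum_divide_distrib[symmetric])

lemma frob_inner_G_mat:
  "frob_inner X \<mu> M (G_mat X \<mu> S)
     = (\<Sum>z\<in>X. \<mu> z * (\<Sum>x\<in>block_of X S z. M z x) / sum \<mu> (block_of X S z))"
proof -
  have "(\<Sum>x\<in>X. \<mu> z * M z x * G_mat X \<mu> S z x / \<mu> x)
      = (\<Sum>x\<in>X. if x \<in> block_of X S z then \<mu> z * M z x / sum \<mu> (block_of X S z) else 0)" for z
    by (intro sum.cong refl) (simp add: G_mat_def pos[THEN less_imp_neq, symmetric])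
  then show ?thesis
    by (simp add: frob_inner_def sum_restrict_block_of sum_divide_distrib[symmetric] sum_distrib_left)
qed

lemma frob_inner_G_mat_G_mat: "frob_inner X \<mu> (G_mat X \<mu> S) (G_mat X \<mu> S) = 2"
proof -
  have "(\<Sum>x\<in>block_of X S z. G_mat X \<mu> S z x) = 1" for z
    using G_mat_row_sum[of z] by (simp add: G_mat_def sum_restrict_block_of)
  then have "frob_inner X \<mu> (G_mat X \<mu> S) (G_mat X \<mu> S) = (\<Sum>z\<in>X. \<mu> z / sum \<mu> (block_of X S z))"
    by (simp add: frob_inner_G_mat)
  also have "\<dots> = 2"
    using sum_S_pos sum_complement_pos
    by (subst sum_over_blocks) (simp add: sum_divide_distrib[symmetric])
  finally show ?thesis .
qed

lemma sum_S_add_complement: "sum \<mu> S + sum \<mu> (X - S) = 1"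
  using sum.subset_diff[OF subset finite, of \<mu>] sum_eq_1 by simp

lemma frob_inner_transition_G_mat:
  assumes "transition_matrix X P" and "reversible X \<mu> P"
  shows "frob_inner X \<mu> P (G_mat X \<mu> S) = 2 - cond_g X \<mu> P S"
proof -
  define F where "F = (\<Sum>z\<in>S. \<Sum>x\<in>X - S. \<mu> z * P z x)"
  have "X - (X - S) = S" using subset by blast
  then have within: "(\<Sum>z\<in>S. \<Sum>x\<in>S. \<mu> z * P z x) = sum \<mu> S - F"
    "(\<Sum>z\<in>X - S. \<Sum>x\<in>X - S. \<mu> z * P z x) = sum \<mu> (X - S) - F"
    using transition_matrix_flow_within[OF assms(1) finite] subset
      reversible_flow_swap[OF assms(2) subset, of "X - S"]
    by (auto simp: F_def)
  have "frob_inner X \<mu> P (G_mat X \<mu> S)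
      = (\<Sum>z\<in>S. \<Sum>x\<in>S. \<mu> z * P z x) / sum \<mu> S
        + (\<Sum>z\<in>X - S. \<Sum>x\<in>X - S. \<mu> z * P z x) / sum \<mu> (X - S)"
    by (subst frob_inner_G_mat, subst sum_over_blocks)
      (simp add: sum_divide_distrib[symmetric] sum_distrib_left)
  also have "\<dots> = 2 - F * (sum \<mu> S + sum \<mu> (X - S)) / (sum \<mu> S * sum \<mu> (X - S))"
    using sum_S_pos sum_complement_pos by (simp add: within field_simps)
  also have "\<dots> = 2 - cond_g X \<mu> P S"
    by (simp add: sum_S_add_complement cond_g_def F_def)
  finally show ?thesis .
qed

lemma frob_sq_A_mat_minus_Pi:
  assumes "transition_matrix X P" and "reversible X \<mu> P"
  shows "frob_sq X \<mu> (\<lambda>x y. A_mat X \<mu> P \<alpha> S x y - Pi_mat \<mu> x y)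
    = \<alpha>\<^sup>2 * frob_inner X \<mu> P P + 2 * \<alpha> * (1 - \<alpha>) * (2 - cond_g X \<mu> P S) + 2 * (1 - \<alpha>)\<^sup>2 - 1"
proof -
  have "\<forall>z\<in>X. (\<Sum>x\<in>X. A_mat X \<mu> P \<alpha> S z x) = 1"
    using assms(1) G_mat_row_sum
    by (simp add: A_mat_def transition_matrix_def sum.distrib sum_distrib_left[symmetric])
  then have "frob_sq X \<mu> (\<lambda>x y. A_mat X \<mu> P \<alpha> S x y - Pi_mat \<mu> x y)
      = frob_inner X \<mu> (\<lambda>x y. \<alpha> * P x y + (1 - \<alpha>) * G_mat X \<mu> S x y)
          (\<lambda>x y. \<alpha> * P x y + (1 - \<alpha>) * G_mat X \<mu> S x y) - 1"
    by (simp only: frob_sq_minus_Pi A_mat_def)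
  also have "\<dots> = \<alpha>\<^sup>2 * frob_inner X \<mu> P P + 2 * \<alpha> * (1 - \<alpha>) * frob_inner X \<mu> P (G_mat X \<mu> S)
      + (1 - \<alpha>)\<^sup>2 * frob_inner X \<mu> (G_mat X \<mu> S) (G_mat X \<mu> S) - 1"
    by (simp only: frob_inner_linear_combination)
  finally show ?thesis
    by (simp add: frob_inner_transition_G_mat[OF assms] frob_inner_G_mat_G_mat)
qed

end

theorem corollary4p9:
  fixes n :: nat and \<mu> :: "nat \<Rightarrow> real" and P :: "nat \<Rightarrow> nat \<Rightarrow> real" and \<alpha> :: real
  assumes "n \<ge> 2"
    and "prob_dist {1..n} \<mu>"
    and "transition_matrix {1..n} P"
    and "reversible {1..n} \<mu> P"
    and "0 < \<alpha>" and "\<alpha> < 1"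
  shows "argmin_on (\<lambda>S. frob_sq {1..n} \<mu>
            (\<lambda>x y. A_mat {1..n} \<mu> P \<alpha> S x y - Pi_mat \<mu> x y))
          {S. S \<subseteq> {1..n} \<and> S \<noteq> {1..n} \<and> card S = 1}
       = argmax_on (cond_g {1..n} \<mu> P) {S. S \<subseteq> {1..n} \<and> S \<noteq> {1..n} \<and> card S = 1}
     \<and> argmax_on (cond_g {1..n} \<mu> P) {S. S \<subseteq> {1..n} \<and> S \<noteq> {1..n} \<and> card S = 1}
       = (\<lambda>x. {x}) ` argmax_on (\<lambda>x. (1 - P x x) / (1 - \<mu> x)) {1..n}"
proof -
  let ?X = "{1..n}"
  interpret finite_prob_dist ?X \<mu>
    using assms(2) by unfold_locales simp
  have singletons: "{S. S \<subseteq> ?X \<and> S \<noteq> ?X \<and> card S = 1} = (\<lambda>x. {x}) ` ?X"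
    using assms(1) by (intro proper_card_1_subsets) simp
  have "frob_sq ?X \<mu> (\<lambda>x y. A_mat ?X \<mu> P \<alpha> {s} x y - Pi_mat \<mu> x y)
      = (\<alpha>\<^sup>2 * frob_inner ?X \<mu> P P + 4 * \<alpha> * (1 - \<alpha>) + 2 * (1 - \<alpha>)\<^sup>2 - 1)
        - 2 * \<alpha> * (1 - \<alpha>) * cond_g ?X \<mu> P {s}" if "s \<in> ?X" for s
  proof -
    interpret bipartition ?X \<mu> "{s}"
    proof
      have "{s} \<in> (\<lambda>x. {x}) ` ?X" using that by simp
      then show "{s} \<noteq> ?X" unfolding singletons[symmetric] by simp
    qed (use that in auto)
    show ?thesis
      using frob_sq_A_mat_minus_Pi[OF assms(3,4)] by (simp add: algebra_simps)
  qed
  then have "argmin_on (\<lambda>S. frob_sq ?X \<mu> (\<lambda>x y. A_mat ?X \<mu> P \<alpha> S x y - Pi_mat \<mu> x y)) ((\<lambda>x. {x}) ` ?X)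
      = argmax_on (cond_g ?X \<mu> P) ((\<lambda>x. {x}) ` ?X)"
    using assms(5,6) by (intro argmin_on_decreasing_affine[of "2 * \<alpha> * (1 - \<alpha>)"]) auto
  moreover have "argmax_on (cond_g ?X \<mu> P) ((\<lambda>x. {x}) ` ?X)
      = (\<lambda>x. {x}) ` argmax_on (\<lambda>x. (1 - P x x) / (1 - \<mu> x)) ?X"
    unfolding argmax_on_image using cond_g_singleton[OF assms(3)]
    by (intro arg_cong[where f = "image _"] argmax_on_cong) simp
  ultimately show ?thesis
    unfolding singletons by simp
qed

end
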